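(* Let $\alpha\in(0,1/2)$ and $v\in\mathcal{C}^\alpha(\mathbb{R}^d)$. Assume that $I^{\mathrm{It\hat o}}_k(v,dv)$ converges uniformly to a limit $I^{\mathrm{It\hat o}}(v,dv)$ as $k\to\infty$. Then $[v,v]_k$ converges uniformly to a limit $[v,v]$. If moreover \[ C:=\sup_k\sup_{0\le m<m'\le2^k}\frac{\big|I^{\mathrm{It\hat o}}_k(v,dv)(m'2^{-k})-I^{\mathrm{It\hat o}}_k(v,dv)(m2^{-k})-v(m2^{-k})\big(v(m'2^{-k})-v(m2^{-k})\big)\big|}{|(m'-m)2^{-k}|^{2\alpha}}<\infty, \] then $[v,v]\in\mathcal{C}^{2\alpha}$ and $\|[v,v]\|_{2\alpha}\lesssim C+\|v\|_\alpha^2$.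
   Context: For $p\in\mathbb{N}$, $1\le m\le2^p$: $t^0_{pm}=(m-1)2^{-p}$, $t^2_{pm}=m2^{-p}$. For continuous $f:[0,1]\to E$ the Schauder coefficients are $f_{-10}=f(0)$, $f_{00}=f(1)-f(0)$, $f_{p0}=0$ ($p\ge1$), $f_{pm}=2f((2m-1)2^{-p-1})-f((m-1)2^{-p})-f(m2^{-p})$ ($p\ge0,m\ge1$); $\|f\|_\alpha:=\sup_{p,m}2^{p\alpha}|f_{pm}|$, $\mathcal{C}^\alpha:=\{f\text{ continuous}:\|f\|_\alpha<\infty\}$ (for $\alpha\in(0,1)$ equal to the $\alpha$-Hölder space with equivalent norm). For $v=(v^1,\dots,v^d)$, $I^{\mathrm{It\hat o}}_k(v,dv)$ is the $d\times d$ matrix $(I^{\mathrm{It\hat o}}_k(v^i,dv^j))_{i,j}$ with \[ I^{\mathrm{It\hat o}}_k(g,dh)(t):=\sum_{m=1}^{2^k}g(t^0_{km})\big(h(t^2_{km}\wedge t)-h(t^0_{km}\wedge t)\big), \] $[v,v]_k:=([v^i,v^j]_k)_{i,j}$ with $[g,h]_k(t):=\sum_{m=1}^{2^k}(g(t^2_{km}\wedge t)-g(t^0_{km}\wedge t))(h(t^2_{km}\wedge t)-h(t^0_{km}\wedge t))$, and $v(s)(v(t)-v(s))$ denotes the matrix $(v^i(s)(v^j(t)-v^j(s)))_{i,j}$. *)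

theory Defs
  imports "HOL-Analysis.Analysis"
begin

text \<open>Schauder coefficients f_{pm} of f : [0,1] -> E, with p ranging over {-1} and the naturals
 (encoded as an int), m a natural number.\<close>
definition schauder_coeff :: "(real \<Rightarrow> 'a::real_normed_vector) \<Rightarrow> int \<Rightarrow> nat \<Rightarrow> 'a" where
  "schauder_coeff f p m =
     (if p = -1 \<and> m = 0 then f 0
      else if p = 0 \<and> m = 0 then f 1 - f 0
      else if p \<ge> 1 \<and> m = 0 then 0
      else if p \<ge> 0 \<and> 1 \<le> m \<and> m \<le> 2 ^ nat p then
        2 *\<^sub>R f ((2 * real m - 1) / 2 ^ (nat p + 1)) - f ((real m - 1) / 2 ^ nat p) - f (real m / 2 ^ nat p)
      else 0)"

definition schauder_index :: "(int \<times> nat) set" where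
  "schauder_index = {(p, m). (p = -1 \<and> m = 0) \<or> (p \<ge> 0 \<and> m \<le> 2 ^ nat p)}"

definition schauder_vals :: "real \<Rightarrow> (real \<Rightarrow> 'a::real_normed_vector) \<Rightarrow> real set" where
  "schauder_vals \<alpha> f = {2 powr (real_of_int p * \<alpha>) * norm (schauder_coeff f p m) | p m. (p, m) \<in> schauder_index}"

text \<open>The norm ||f||_alpha = sup_{p,m} 2^{p alpha} |f_{pm}| (meaningful when finite).\<close>
definition schauder_norm :: "real \<Rightarrow> (real \<Rightarrow> 'a::real_normed_vector) \<Rightarrow> real" where
  "schauder_norm \<alpha> f = Sup (schauder_vals \<alpha> f)"

definition holder_space :: "real \<Rightarrow> (real \<Rightarrow> 'a::real_normed_vector) \<Rightarrow> bool" where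
  "holder_space \<alpha> f \<longleftrightarrow> continuous_on {0..1} f \<and> bdd_above (schauder_vals \<alpha> f)"

definition t0 :: "nat \<Rightarrow> nat \<Rightarrow> real" where "t0 k m = (real m - 1) / 2 ^ k"
definition t2 :: "nat \<Rightarrow> nat \<Rightarrow> real" where "t2 k m = real m / 2 ^ k"

definition ito_sum_scalar :: "nat \<Rightarrow> (real \<Rightarrow> real) \<Rightarrow> (real \<Rightarrow> real) \<Rightarrow> real \<Rightarrow> real" where
  "ito_sum_scalar k g h t = (\<Sum>m = 1..2 ^ k. g (t0 k m) * (h (min (t2 k m) t) - h (min (t0 k m) t)))"

definition qv_scalar :: "nat \<Rightarrow> (real \<Rightarrow> real) \<Rightarrow> (real \<Rightarrow> real) \<Rightarrow> real \<Rightarrow> real" where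
  "qv_scalar k g h t = (\<Sum>m = 1..2 ^ k. (g (min (t2 k m) t) - g (min (t0 k m) t)) * (h (min (t2 k m) t) - h (min (t0 k m) t)))"

definition ito_sum :: "nat \<Rightarrow> (real \<Rightarrow> real ^ 'd) \<Rightarrow> real \<Rightarrow> real ^ 'd ^ 'd" where
  "ito_sum k v t = (\<chi> i j. ito_sum_scalar k (\<lambda>s. v s $ i) (\<lambda>s. v s $ j) t)"

definition qv :: "nat \<Rightarrow> (real \<Rightarrow> real ^ 'd) \<Rightarrow> real \<Rightarrow> real ^ 'd ^ 'd" where
  "qv k v t = (\<chi> i j. qv_scalar k (\<lambda>s. v s $ i) (\<lambda>s. v s $ j) t)"

definition incr_mat :: "(real \<Rightarrow> real ^ 'd) \<Rightarrow> real \<Rightarrow> real \<Rightarrow> real ^ 'd ^ 'd" where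
  "incr_mat v s t = (\<chi> i j. v s $ i * (v t $ j - v s $ j))"

definition C_vals :: "real \<Rightarrow> (real \<Rightarrow> real ^ 'd) \<Rightarrow> real set" where
  "C_vals \<alpha> v = {norm (ito_sum k v (real m' / 2 ^ k) - ito_sum k v (real m / 2 ^ k)
                        - incr_mat v (real m / 2 ^ k) (real m' / 2 ^ k))
                   / (\<bar>(real m' - real m) / 2 ^ k\<bar>) powr (2 * \<alpha>)
                 | k m m'. m < m' \<and> m' \<le> 2 ^ k}"

end

theory Submission
  imports Defs
begin

(* Summation by parts gives  [v,v]_k(t) = v(t)v(t)^T - v(0)v(0)^T - I_k(t) - I_k(t)^T,
   so [v,v]_k converges uniformly to  Q = v v^T - v(0)v(0)^T - I - I^T  whenever
   I_k -> I uniformly.  On a dyadic interval [s,t] of length 2^-n,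
     Q(t) - Q(s) = (v(t)-v(s))(v(t)-v(s))^T - (A + A^T),   A = I(t) - I(s) - v(s)(v(t)-v(s)).
   The first term is O(||v||_alpha^2 2^(-2n alpha)) by the Schauder estimate for
   increments of C^alpha functions over dyadic intervals, and A is O(C 2^(-2n alpha))
   by passing to the limit in the definition of C.  A converse Schauder estimate
   turns such dyadic increment bounds into a bound on the 2 alpha-norm. *)


section \<open>Summation by parts for the discrete bracket\<close>

lemma qv_scalar_by_parts:
  assumes t: "0 \<le> t" "t \<le> 1"
  shows "qv_scalar k g h t = g t * h t - g 0 * h 0 - ito_sum_scalar k g h t - ito_sum_scalar k h g t"
proof -
  define u where "u m = g (min (real m / 2^k) t) * h (min (real m / 2^k) t)" for m :: nat
  have term_eq: "(g (min (t2 k m) t) - g (min (t0 k m) t)) * (h (min (t2 k m) t) - h (min (t0 k m) t))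
      = (u m - u (m - 1)) - g (t0 k m) * (h (min (t2 k m) t) - h (min (t0 k m) t))
        - h (t0 k m) * (g (min (t2 k m) t) - g (min (t0 k m) t))" if m: "m \<in> {1..2^k}" for m
  proof -
    have e2: "t2 k m = real m / 2^k" by (simp add: t2_def)
    have e0: "t0 k m = real (m - 1) / 2^k" using m by (simp add: t0_def of_nat_diff)
    have ordered: "t0 k m \<le> t2 k m" by (simp add: t0_def t2_def divide_right_mono)
    show ?thesis
    proof (cases "t0 k m \<le> t")
      case True
      then show ?thesis unfolding u_def using e2 e0 by (simp add: algebra_simps min_absorb1)
    next
      case False
      then have "min (t0 k m) t = t" "min (t2 k m) t = t"
        "min (real (m - 1) / 2^k) t = t" "min (real m / 2^k) t = t"
        using ordered e0 e2 by auto
      then show ?thesis unfolding u_def by simp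
    qed
  qed
  have "qv_scalar k g h t = (\<Sum>m = 1..2 ^ k. (u m - u (m - 1))
        - g (t0 k m) * (h (min (t2 k m) t) - h (min (t0 k m) t))
        - h (t0 k m) * (g (min (t2 k m) t) - g (min (t0 k m) t)))"
    unfolding qv_scalar_def by (rule sum.cong) (auto simp: term_eq)
  also have "\<dots> = (\<Sum>m = 1..2 ^ k. u m - u (m - 1)) - ito_sum_scalar k g h t - ito_sum_scalar k h g t"
    by (simp add: sum_subtractf ito_sum_scalar_def)
  also have "(\<Sum>m = 1..2 ^ k. u m - u (m - 1)) = u (2^k) - u 0"
    using sum_telescope''[of 0 "2^k" u] by simp
  also have "u (2^k) - u 0 = g t * h t - g 0 * h 0" using t by (simp add: u_def)
  finally show ?thesis .
qed

lemma ito_sum_scalar_at_0: "ito_sum_scalar k g h 0 = 0"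
  unfolding ito_sum_scalar_def
  by (rule sum.neutral) (auto simp: t0_def t2_def min_absorb2)

lemma ito_sum_at_0: "ito_sum k v 0 = 0"
  by (simp add: vec_eq_iff ito_sum_def ito_sum_scalar_at_0)

definition outer_prod :: "real ^ 'n \<Rightarrow> real ^ 'n \<Rightarrow> real ^ 'n ^ 'n" where
  "outer_prod x y = (\<chi> i j. x $ i * y $ j)"

lemma qv_by_parts:
  assumes "0 \<le> t" "t \<le> 1"
  shows "qv k v t = outer_prod (v t) (v t) - outer_prod (v 0) (v 0) - ito_sum k v t - transpose (ito_sum k v t)"
  using assms
  by (simp add: vec_eq_iff qv_def ito_sum_def transpose_def outer_prod_def qv_scalar_by_parts)

definition bracket :: "(real \<Rightarrow> real ^ 'd) \<Rightarrow> (real \<Rightarrow> real ^ 'd ^ 'd) \<Rightarrow> real \<Rightarrow> real ^ 'd ^ 'd" where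
  "bracket v I t = outer_prod (v t) (v t) - outer_prod (v 0) (v 0) - I t - transpose (I t)"

lemma bracket_increment:
  "bracket v I t - bracket v I s =
     outer_prod (v t - v s) (v t - v s)
     - ((I t - I s - incr_mat v s t) + transpose (I t - I s - incr_mat v s t))"
  by (simp add: vec_eq_iff bracket_def outer_prod_def transpose_def incr_mat_def algebra_simps)


lemma norm_matrix_sq: "(norm (M :: real^'n^'m))\<^sup>2 = (\<Sum>i\<in>UNIV. \<Sum>j\<in>UNIV. (M$i$j)\<^sup>2)"
  unfolding norm_vec_def L2_set_def by (simp add: sum_nonneg)

text \<open>Transposition is an isometry, so the symmetrised defect A + A^T costs at most 2|A|.\<close>
lemma norm_transpose: "norm (transpose (M :: real^'n^'m)) = norm M"
proof -
  have "(norm (transpose M))\<^sup>2 = (norm M)\<^sup>2"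
    unfolding norm_matrix_sq transpose_def vec_lambda_beta by (rule sum.swap)
  then show ?thesis by (simp add: power2_eq_iff_nonneg)
qed

lemma norm_outer_prod_self: "norm (outer_prod x x) = (norm x)\<^sup>2"
proof -
  have "(norm (outer_prod x x))\<^sup>2 = ((norm x)\<^sup>2)\<^sup>2"
    unfolding norm_matrix_sq outer_prod_def
    by (simp add: norm_vec_def L2_set_def sum_nonneg power_mult_distrib sum_product
        power2_eq_square mult_ac)
  then show ?thesis by (rule power2_eq_imp_eq) simp_all
qed

lemma bounded_linear_transpose: "bounded_linear (transpose :: real^'n^'m \<Rightarrow> real^'m^'n)"
proof (rule bounded_linear_intro[where K=1])
  fix x y :: "real^'n^'m" and r :: real
  show "transpose (x + y) = transpose x + transpose y" by (simp add: transpose_def vec_eq_iff)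
  show "transpose (r *\<^sub>R x) = r *\<^sub>R transpose x" by (rule transpose_scalar)
  show "norm (transpose x) \<le> norm x * 1" by (simp add: norm_transpose)
qed

lemma norm_bracket_increment:
  "norm (bracket v I t - bracket v I s) \<le> (norm (v t - v s))\<^sup>2 + 2 * norm (I t - I s - incr_mat v s t)"
proof -
  let ?A = "I t - I s - incr_mat v s t"
  have "norm (bracket v I t - bracket v I s)
        \<le> norm (outer_prod (v t - v s) (v t - v s)) + norm (?A + transpose ?A)"
    unfolding bracket_increment by (rule norm_triangle_ineq4)
  also have "norm (?A + transpose ?A) \<le> norm ?A + norm (transpose ?A)" by (rule norm_triangle_ineq)
  finally show ?thesis by (simp add: norm_outer_prod_self norm_transpose)
qed


lemma ito_sum_continuous:
  fixes v :: "real \<Rightarrow> real^'d"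
  assumes "continuous_on {0..1} v"
  shows "continuous_on {0..1} (ito_sum k v)"
proof -
  have comp: "continuous_on {0..1} (\<lambda>s. v s $ i)" for i
    using assms by (rule continuous_on_component)
  have stopped: "continuous_on {0..1} (\<lambda>t. v (min (real m / 2^k) t) $ i)" if "m \<le> 2^k" for m i
  proof (rule continuous_on_compose2[OF comp])
    show "continuous_on {0..1} (\<lambda>t. min (real m / 2^k) t)" by (intro continuous_intros)
    have "real m / 2^k \<le> 1" using that by (simp add: field_simps)
    then show "(\<lambda>t. min (real m / 2^k) t) ` {0..1} \<subseteq> {0..1}" by auto
  qed
  have stopped': "continuous_on {0..1} (\<lambda>t. v (min ((real m - 1) / 2^k) t) $ i)"
    if "1 \<le> m" "m \<le> 2^k" for m i
    using stopped[of "m - 1" i] that by (simp add: of_nat_diff)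
  show ?thesis
    unfolding ito_sum_def ito_sum_scalar_def t0_def t2_def
    by (intro continuous_on_vec_lambda continuous_on_sum continuous_on_mult continuous_on_diff
        continuous_on_const stopped stopped') auto
qed

lemma qv_uniform_limit:
  assumes "uniform_limit {0..1} (\<lambda>k. ito_sum k v) I sequentially"
  shows "uniform_limit {0..1} (\<lambda>k. qv k v) (bracket v I) sequentially"
proof -
  have "uniform_limit {0..1}
          (\<lambda>k t. outer_prod (v t) (v t) - outer_prod (v 0) (v 0) - ito_sum k v t - transpose (ito_sum k v t))
          (bracket v I) sequentially"
    unfolding bracket_def
    by (intro uniform_limit_minus uniform_limit_const assms
        bounded_linear.uniform_limit[OF bounded_linear_transpose])
  then show ?thesis
    by (rule uniform_limit_cong[THEN iffD1, rotated -1]) (auto simp: qv_by_parts)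
qed

lemma bracket_continuous:
  assumes "continuous_on {0..1} v" and "uniform_limit {0..1} (\<lambda>k. ito_sum k v) I sequentially"
  shows "continuous_on {0..1} (bracket v I)"
proof -
  have "continuous_on {0..1} I"
    by (rule uniform_limit_theorem[OF always_eventually assms(2)])
       (auto intro: ito_sum_continuous[OF assms(1)])
  then show ?thesis
    unfolding bracket_def outer_prod_def
    by (intro continuous_on_diff continuous_on_vec_lambda continuous_intros assms(1)
        bounded_linear.continuous_on[OF bounded_linear_transpose])
qed

lemma bracket_at_0:
  assumes "uniform_limit {0..1} (\<lambda>k. ito_sum k v) I sequentially"
  shows "bracket v I 0 = 0"
proof -
  have "(\<lambda>k. ito_sum k v 0) \<longlonglongrightarrow> I 0"
    by (rule tendsto_uniform_limitI[OF assms]) simp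
  then have "I 0 = 0" by (simp add: ito_sum_at_0 LIMSEQ_const_iff)
  then show ?thesis by (simp add: bracket_def vec_eq_iff transpose_def)
qed


section \<open>Schauder coefficients and dyadic increments\<close>

lemma powr_dyadic_cancel: "2 powr (real n * a) * (2 powr (-a))^n = 1"
proof -
  have "(2 powr (-a))^n = 2 powr (- a * real n)"
    by (simp add: powr_realpow[symmetric] powr_powr)
  then show ?thesis by (simp add: powr_add[symmetric])
qed

lemma powr_dyadic_square: "((2 powr (-a))^n)\<^sup>2 = (2 powr (-(2*a)))^n" for a :: real
proof -
  have "((2 powr (-a))^n)\<^sup>2 = ((2 powr (-a))\<^sup>2)^n" by (simp only: power_mult[symmetric] mult.commute)
  also have "(2 powr (-a))\<^sup>2 = (2::real) powr (-(2*a))"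
    by (simp add: powr_realpow[symmetric] powr_powr mult.commute)
  finally show ?thesis .
qed

lemma powr_dyadic_length: "\<bar>1 / 2^n\<bar> powr (2*a) = (2 powr (-(2*a)))^n" for a :: real
proof -
  have "\<bar>1 / 2^n\<bar> = (2::real) powr (- real n)"
    by (simp add: powr_minus powr_realpow divide_inverse)
  then show ?thesis by (simp add: powr_powr powr_realpow[symmetric] mult_ac)
qed

lemma schauder_coeff_dyadic:
  assumes "i + 1 \<le> 2^n"
  shows "schauder_coeff f (int n) (Suc i) =
    2 *\<^sub>R f (real (2*i+1) / 2^(n+1)) - f (real i / 2^n) - f (real (i+1) / 2^n)"
  using assms by (simp add: schauder_coeff_def algebra_simps)

lemma schauder_coeff_le_norm:
  assumes "bdd_above (schauder_vals \<alpha> f)" "(p, m) \<in> schauder_index"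
  shows "2 powr (real_of_int p * \<alpha>) * norm (schauder_coeff f p m) \<le> schauder_norm \<alpha> f"
  unfolding schauder_norm_def
  by (rule cSup_upper[OF _ assms(1)]) (use assms(2) in \<open>auto simp: schauder_vals_def\<close>)

lemma schauder_norm_nonneg:
  assumes "bdd_above (schauder_vals \<alpha> f)"
  shows "0 \<le> schauder_norm \<alpha> f"
proof -
  have "(-1, 0) \<in> schauder_index" by (simp add: schauder_index_def)
  from schauder_coeff_le_norm[OF assms this] show ?thesis
    by (meson norm_ge_zero order_trans powr_ge_zero zero_le_mult_iff)
qed

lemma second_difference_bound:
  assumes "bdd_above (schauder_vals \<alpha> f)" "i + 1 \<le> 2^n"
  shows "norm (2 *\<^sub>R f (real (2*i+1) / 2^(n+1)) - f (real i / 2^n) - f (real (i+1) / 2^n))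
         \<le> schauder_norm \<alpha> f * (2 powr (-\<alpha>))^n"
proof -
  let ?X = "schauder_coeff f (int n) (Suc i)"
  have idx: "(int n, Suc i) \<in> schauder_index" using assms by (simp add: schauder_index_def)
  have "norm ?X = (2 powr (real n * \<alpha>) * norm ?X) * (2 powr (-\<alpha>))^n"
    using powr_dyadic_cancel[of n \<alpha>] by (simp add: mult_ac)
  also have "\<dots> \<le> schauder_norm \<alpha> f * (2 powr (-\<alpha>))^n"
    using schauder_coeff_le_norm[OF assms(1) idx] by (intro mult_right_mono) simp_all
  finally show ?thesis unfolding schauder_coeff_dyadic[OF assms(2)] .
qed

lemma half_increments_bound:
  fixes a b m :: "'a::real_normed_vector"
  shows "norm (m - a) \<le> (norm (b - a) + norm (2 *\<^sub>R m - a - b)) / 2"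
    and "norm (b - m) \<le> (norm (b - a) + norm (2 *\<^sub>R m - a - b)) / 2"
proof -
  let ?d = "2 *\<^sub>R m - a - b"
  have "2 *\<^sub>R (m - a) = (b - a) + ?d" "2 *\<^sub>R (b - m) = (b - a) - ?d"
    by (simp_all add: algebra_simps scaleR_2)
  then have left: "2 * norm (m - a) = norm ((b - a) + ?d)"
    and right: "2 * norm (b - m) = norm ((b - a) - ?d)"
    by (metis norm_scaleR abs_numeral)+
  show "norm (m - a) \<le> (norm (b - a) + norm ?d) / 2"
    using left norm_triangle_ineq[of "b - a" ?d] by simp
  show "norm (b - m) \<le> (norm (b - a) + norm ?d) / 2"
    using right norm_triangle_ineq4[of "b - a" ?d] by simp
qed

text \<open>The constant 1/(2 * 2^-alpha - 1) of the geometric series in the Schauder estimate.\<close>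
definition dyadic_const :: "real \<Rightarrow> real" where
  "dyadic_const \<alpha> = 1 / (2 * 2 powr (-\<alpha>) - 1)"

text \<open>For 0 <= alpha < 1 the constant is at least 1 and satisfies (c + 1)/2 = c 2^-alpha,
  which makes the induction in the Schauder estimate close.\<close>
lemma dyadic_const_props:
  assumes "0 \<le> \<alpha>" "\<alpha> < 1"
  shows "1 \<le> dyadic_const \<alpha>" and "(dyadic_const \<alpha> + 1) / 2 = dyadic_const \<alpha> * 2 powr (-\<alpha>)"
proof -
  have "(2::real) powr (-1) < 2 powr (-\<alpha>)" using assms by (intro powr_less_mono) auto
  then have half: "1/2 < 2 powr (-\<alpha>)" by (simp add: powr_minus)
  have "2 powr (-\<alpha>) \<le> (1::real)" using powr_mono[of "-\<alpha>" 0 2] assms(1) by simp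
  with half show "1 \<le> dyadic_const \<alpha>" by (simp add: dyadic_const_def field_simps)
  show "(dyadic_const \<alpha> + 1) / 2 = dyadic_const \<alpha> * 2 powr (-\<alpha>)"
    using half by (simp add: dyadic_const_def field_simps)
qed

lemma dyadic_increment_bound:
  fixes f :: "real \<Rightarrow> 'a::real_normed_vector"
  assumes \<alpha>: "0 \<le> \<alpha>" "\<alpha> < 1" and bdd: "bdd_above (schauder_vals \<alpha> f)"
  shows "j + 1 \<le> 2^n \<Longrightarrow>
    norm (f (real (j+1) / 2^n) - f (real j / 2^n)) \<le> dyadic_const \<alpha> * schauder_norm \<alpha> f * (2 powr (-\<alpha>))^n"
proof (induction n arbitrary: j)
  case 0
  have "norm (f 1 - f 0) \<le> schauder_norm \<alpha> f"
    using schauder_coeff_le_norm[OF bdd, of 0 0] by (simp add: schauder_index_def schauder_coeff_def)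
  also have "\<dots> \<le> dyadic_const \<alpha> * schauder_norm \<alpha> f"
    using dyadic_const_props(1)[OF \<alpha>] schauder_norm_nonneg[OF bdd] by (simp add: mult_le_cancel_right1)
  finally show ?case using 0 by simp
next
  case (Suc n)
  let ?N = "schauder_norm \<alpha> f" and ?c = "dyadic_const \<alpha>" and ?r = "2 powr (-\<alpha>)"
  define i where "i = j div 2"
  have i: "i + 1 \<le> 2^n" using Suc.prems by (simp add: i_def)
  define a b mid where "a = f (real i / 2^n)" and "b = f (real (i+1) / 2^n)"
    and "mid = f (real (2*i+1) / 2^(n+1))"
  have "(norm (b - a) + norm (2 *\<^sub>R mid - a - b)) / 2 \<le> (?c * ?N * ?r^n + ?N * ?r^n) / 2"
    using Suc.IH[OF i] second_difference_bound[OF bdd i] unfolding a_def b_def mid_def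
    by (intro divide_right_mono add_mono) simp_all
  also have "\<dots> = (?c + 1) / 2 * (?N * ?r^n)" by (simp add: algebra_simps)
  also have "\<dots> = ?c * ?N * ?r ^ Suc n"
    unfolding dyadic_const_props(2)[OF \<alpha>] by (simp add: mult_ac)
  finally have full: "(norm (b - a) + norm (2 *\<^sub>R mid - a - b)) / 2 \<le> ?c * ?N * ?r ^ Suc n" .
  have left_half: "norm (mid - a) \<le> ?c * ?N * ?r ^ Suc n"
    using half_increments_bound(1)[of mid a b] full by (rule order_trans)
  have right_half: "norm (b - mid) \<le> ?c * ?N * ?r ^ Suc n"
    using half_increments_bound(2)[of b mid a] full by (rule order_trans)
  show ?case
  proof (cases "even j")
    case True
    then have "j = 2 * i" by (simp add: i_def)
    then have "real j / 2 ^ Suc n = real i / 2^n" "real (j+1) / 2 ^ Suc n = real (2*i+1) / 2^(n+1)"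
      by (simp_all add: field_simps)
    then show ?thesis using left_half by (simp add: a_def mid_def)
  next
    case False
    then have "j = 2 * i + 1" by (simp add: i_def)
    then have "real j / 2 ^ Suc n = real (2*i+1) / 2^(n+1)" "real (j+1) / 2 ^ Suc n = real (i+1) / 2^n"
      by (simp_all add: field_simps)
    then show ?thesis using right_half by (simp add: b_def mid_def)
  qed
qed

lemma schauder_index_cases:
  assumes "(p, m) \<in> schauder_index"
  obtains "p = -1" "m = 0" | n where "p = int n" "m = 0"
    | n i where "p = int n" "m = Suc i" "i + 1 \<le> 2^n"
proof -
  from assms consider "p = -1" "m = 0" | "0 \<le> p" "m \<le> 2 ^ nat p"
    unfolding schauder_index_def by auto
  then show thesis
  proof cases
    case 2
    then have p: "p = int (nat p)" by simp
    show thesis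
    proof (cases m)
      case 0
      with p that(2) show thesis by blast
    next
      case (Suc i)
      with p 2 that(3)[of "nat p" i] show thesis by simp
    qed
  qed (use that(1) in blast)
qed

lemma schauder_coeff_from_dyadic_increments:
  fixes f :: "real \<Rightarrow> 'a::real_normed_vector"
  assumes \<beta>: "0 \<le> \<beta>" and B: "0 \<le> B" and f0: "norm (f 0) \<le> 2 * B"
    and incr: "\<And>n j. j + 1 \<le> 2^n \<Longrightarrow>
                 norm (f (real (j+1) / 2^n) - f (real j / 2^n)) \<le> B * (2 powr (-\<beta>))^n"
    and pm: "(p, m) \<in> schauder_index"
  shows "2 powr (real_of_int p * \<beta>) * norm (schauder_coeff f p m) \<le> 2 * B"
proof -
  let ?r = "2 powr (-\<beta>) :: real"
  have r1: "?r \<le> 1" using powr_mono[of "-\<beta>" 0 2] \<beta> by simp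
  from pm show ?thesis
  proof (cases rule: schauder_index_cases)
    case 1
    have "?r * norm (f 0) \<le> 1 * norm (f 0)" by (intro mult_right_mono r1) simp
    then show ?thesis using 1 f0 by (simp add: schauder_coeff_def)
  next
    case (2 n)
    have "norm (f 1 - f 0) \<le> B" using incr[of 0 0] by simp
    then show ?thesis using 2 B by (cases "n = 0") (simp_all add: schauder_coeff_def)
  next
    case (3 n i)
    have le: "2*i+1 \<le> 2^(n+1)" "2*i+1+1 \<le> 2^(n+1)" using 3 by simp_all
    have pts: "real i / 2^n = real (2*i) / 2^(n+1)" "real (i+1) / 2^n = real (2*i+1+1) / 2^(n+1)"
      by (simp_all add: field_simps)
    define a mid b where "a = f (real (2*i) / 2^(n+1))" and "mid = f (real (2*i+1) / 2^(n+1))"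
      and "b = f (real (2*i+1+1) / 2^(n+1))"
    have "schauder_coeff f p m = (mid - a) - (b - mid)"
      unfolding 3 schauder_coeff_dyadic[OF 3(3)] pts a_def mid_def b_def
      by (simp add: algebra_simps scaleR_2)
    then have "norm (schauder_coeff f p m) \<le> norm (mid - a) + norm (b - mid)"
      by (simp add: norm_triangle_ineq4)
    also have "\<dots> \<le> 2 * B * ?r * ?r^n"
      using incr[OF le(1)] incr[OF le(2)] unfolding a_def mid_def b_def by simp
    finally have "2 powr (real n * \<beta>) * norm (schauder_coeff f p m)
                  \<le> 2 * B * ?r * (2 powr (real n * \<beta>) * ?r^n)"
      by (simp add: mult_left_mono mult_ac)
    also have "\<dots> \<le> 2 * B" using B r1 by (simp add: powr_dyadic_cancel mult_left_le)
    finally show ?thesis using 3 by simp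
  qed
qed

lemma schauder_norm_from_dyadic_increments:
  fixes f :: "real \<Rightarrow> 'a::real_normed_vector"
  assumes \<beta>: "0 \<le> \<beta>" and B: "0 \<le> B" and f0: "norm (f 0) \<le> 2 * B"
    and incr: "\<And>n j. j + 1 \<le> 2^n \<Longrightarrow>
                 norm (f (real (j+1) / 2^n) - f (real j / 2^n)) \<le> B * (2 powr (-\<beta>))^n"
  shows "bdd_above (schauder_vals \<beta> f)" and "schauder_norm \<beta> f \<le> 2 * B"
proof -
  have vals: "x \<le> 2 * B" if "x \<in> schauder_vals \<beta> f" for x
    using that schauder_coeff_from_dyadic_increments[OF \<beta> B f0 incr]
    unfolding schauder_vals_def by blast
  show "bdd_above (schauder_vals \<beta> f)" using vals by (rule bdd_aboveI)
  have "schauder_vals \<beta> f \<noteq> {}" unfolding schauder_vals_def schauder_index_def by blast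
  then show "schauder_norm \<beta> f \<le> 2 * B" unfolding schauder_norm_def using vals by (rule cSup_least)
qed


section \<open>The Ito defect on dyadic intervals\<close>

lemma C_vals_Sup_nonneg:
  assumes "bdd_above (C_vals \<alpha> v)"
  shows "0 \<le> Sup (C_vals \<alpha> v)"
proof -
  let ?x = "norm (ito_sum 0 v (real (1::nat) / 2 ^ 0) - ito_sum 0 v (real (0::nat) / 2 ^ 0)
             - incr_mat v (real (0::nat) / 2 ^ 0) (real (1::nat) / 2 ^ 0))
            / (\<bar>(real (1::nat) - real (0::nat)) / 2 ^ 0\<bar>) powr (2 * \<alpha>)"
  have "?x \<in> C_vals \<alpha> v" unfolding C_vals_def by fastforce
  from cSup_upper[OF this assms] show ?thesis by (smt (verit) divide_nonneg_nonneg norm_ge_zero powr_ge_zero)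
qed

text \<open>Passing to the limit in the definition of C: on a dyadic interval [s,t] of length
  2^-n the defect I(t) - I(s) - v(s)(v(t)-v(s)) is at most C 2^(-2 n alpha).\<close>
lemma ito_defect_dyadic_bound:
  fixes v :: "real \<Rightarrow> real^'d"
  assumes lim: "\<And>t. t \<in> {0..1} \<Longrightarrow> (\<lambda>k. ito_sum k v t) \<longlonglongrightarrow> I t"
    and bdd: "bdd_above (C_vals \<alpha> v)" and j: "j + 1 \<le> 2^n"
  shows "norm (I (real (j+1) / 2^n) - I (real j / 2^n) - incr_mat v (real j / 2^n) (real (j+1) / 2^n))
         \<le> Sup (C_vals \<alpha> v) * (2 powr (-(2*\<alpha>)))^n"
proof -
  define s t R where "s = real j / 2^n" and "t = real (j+1) / 2^n" and "R = (2 powr (-(2*\<alpha>)))^n"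
  have R: "0 < R" by (simp add: R_def)
  have "real j + 1 \<le> 2^n"
    using j by (metis of_nat_1 of_nat_add of_nat_le_iff of_nat_numeral of_nat_power)
  then have st: "s \<in> {0..1}" "t \<in> {0..1}" using j by (auto simp: s_def t_def divide_le_eq)
  have ev: "\<forall>k\<ge>n. norm (ito_sum k v t - ito_sum k v s - incr_mat v s t) \<le> Sup (C_vals \<alpha> v) * R"
  proof (intro allI impI)
    fix k assume nk: "n \<le> k"
    define m m' where "m = j * 2^(k-n)" and "m' = (j+1) * 2^(k-n)"
    have pk: "(2::real)^k = 2^(k-n) * 2^n" "(2::nat)^k = 2^(k-n) * 2^n"
      using nk by (simp_all add: power_add[symmetric])
    have pts: "real m / 2^k = s" "real m' / 2^k = t" "(real m' - real m) / 2^k = 1 / 2^n"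
      unfolding m_def m'_def s_def t_def pk by (auto simp: field_simps)
    have "(j+1) * 2^(k-n) \<le> 2^n * 2^(k-n)" using j by (rule mult_right_mono) simp
    then have "m < m'" "m' \<le> 2^k" unfolding m_def m'_def pk by (auto simp: mult_ac)
    then have "norm (ito_sum k v (real m' / 2^k) - ito_sum k v (real m / 2^k)
                 - incr_mat v (real m / 2^k) (real m' / 2^k))
               / (\<bar>(real m' - real m) / 2^k\<bar>) powr (2 * \<alpha>) \<in> C_vals \<alpha> v"
      unfolding C_vals_def by blast
    from cSup_upper[OF this bdd]
    have "norm (ito_sum k v t - ito_sum k v s - incr_mat v s t) / R \<le> Sup (C_vals \<alpha> v)"
      unfolding pts powr_dyadic_length R_def .
    then show "norm (ito_sum k v t - ito_sum k v s - incr_mat v s t) \<le> Sup (C_vals \<alpha> v) * R"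
      using R by (simp add: pos_divide_le_eq)
  qed
  have "(\<lambda>k. norm (ito_sum k v t - ito_sum k v s - incr_mat v s t))
          \<longlonglongrightarrow> norm (I t - I s - incr_mat v s t)"
    by (intro tendsto_intros lim st)
  from LIMSEQ_le_const2[OF this] ev show ?thesis by (auto simp: s_def t_def R_def)
qed


text \<open>Combining the two dyadic estimates with the converse Schauder estimate.\<close>
lemma bracket_holder:
  fixes v :: "real \<Rightarrow> real^'d"
  assumes \<alpha>: "0 \<le> \<alpha>" "\<alpha> < 1" and v: "holder_space \<alpha> v"
    and UI: "uniform_limit {0..1} (\<lambda>k. ito_sum k v) I sequentially"
    and C: "bdd_above (C_vals \<alpha> v)"
  shows "holder_space (2*\<alpha>) (bracket v I)"
    and "schauder_norm (2*\<alpha>) (bracket v I)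
           \<le> (4 + 2 * (dyadic_const \<alpha>)\<^sup>2) * (Sup (C_vals \<alpha> v) + (schauder_norm \<alpha> v)\<^sup>2)"
proof -
  let ?C = "Sup (C_vals \<alpha> v)" and ?N = "schauder_norm \<alpha> v" and ?c = "dyadic_const \<alpha>"
  define B where "B = 2 * ?C + ?c\<^sup>2 * ?N\<^sup>2"
  have cont: "continuous_on {0..1} v" and bv: "bdd_above (schauder_vals \<alpha> v)"
    using v unfolding holder_space_def by auto
  have C0: "0 \<le> ?C" by (rule C_vals_Sup_nonneg[OF C])
  then have B0: "0 \<le> B" by (simp add: B_def)
  have incr: "norm (bracket v I (real (j+1) / 2^n) - bracket v I (real j / 2^n))
                \<le> B * (2 powr (-(2*\<alpha>)))^n" if j: "j + 1 \<le> 2^n" for n j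
  proof -
    let ?s = "real j / 2^n" and ?t = "real (j+1) / 2^n"
    have "norm (v ?t - v ?s) \<le> ?c * ?N * (2 powr (-\<alpha>))^n"
      by (rule dyadic_increment_bound[OF \<alpha> bv j])
    then have "(norm (v ?t - v ?s))\<^sup>2 \<le> ?c\<^sup>2 * ?N\<^sup>2 * (2 powr (-(2*\<alpha>)))^n"
      by (metis power_mono norm_ge_zero power_mult_distrib powr_dyadic_square)
    moreover have "norm (I ?t - I ?s - incr_mat v ?s ?t) \<le> ?C * (2 powr (-(2*\<alpha>)))^n"
      by (rule ito_defect_dyadic_bound[OF tendsto_uniform_limitI[OF UI] C j])
    ultimately show ?thesis
      using norm_bracket_increment[of v I ?t ?s] by (simp add: B_def algebra_simps)
  qed
  have \<beta>: "0 \<le> 2*\<alpha>" using \<alpha> by simp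
  have f0: "norm (bracket v I 0) \<le> 2 * B" using bracket_at_0[OF UI] B0 by simp
  note estimate = schauder_norm_from_dyadic_increments[OF \<beta> B0 f0 incr]
  show "holder_space (2*\<alpha>) (bracket v I)"
    unfolding holder_space_def using bracket_continuous[OF cont UI] estimate(1) by simp
  have "2 * B \<le> (4 + 2 * ?c\<^sup>2) * (?C + ?N\<^sup>2)" using C0 by (simp add: B_def algebra_simps)
  with estimate(2) show "schauder_norm (2*\<alpha>) (bracket v I) \<le> (4 + 2 * ?c\<^sup>2) * (?C + ?N\<^sup>2)"
    by linarith
qed


text \<open>The limit is Q = bracket v I and the constant is K = 4 + 2 c^2 with c = dyadic_const alpha;
  the argument only uses 0 <= alpha < 1.\<close>
theorem mainTheorem16:
  fixes \<alpha> :: real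
  assumes "0 < \<alpha>" and "\<alpha> < 1/2"
  shows "\<exists>K. \<forall>v :: real \<Rightarrow> real ^ 'd.
           holder_space \<alpha> v \<and> (\<exists>I. uniform_limit {0..1} (\<lambda>k. ito_sum k v) I sequentially) \<longrightarrow>
           (\<exists>Q. uniform_limit {0..1} (\<lambda>k. qv k v) Q sequentially \<and>
                (bdd_above (C_vals \<alpha> v) \<longrightarrow>
                   holder_space (2 * \<alpha>) Q \<and>
                   schauder_norm (2 * \<alpha>) Q \<le> K * (Sup (C_vals \<alpha> v) + (schauder_norm \<alpha> v)\<^sup>2)))"
proof (intro exI[of _ "4 + 2 * (dyadic_const \<alpha>)\<^sup>2"] allI impI)
  fix v :: "real \<Rightarrow> real ^ 'd"
  assume "holder_space \<alpha> v \<and> (\<exists>I. uniform_limit {0..1} (\<lambda>k. ito_sum k v) I sequentially)"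
  then obtain I where v: "holder_space \<alpha> v"
    and UI: "uniform_limit {0..1} (\<lambda>k. ito_sum k v) I sequentially" by blast
  have \<alpha>: "0 \<le> \<alpha>" "\<alpha> < 1" using assms by simp_all
  show "\<exists>Q. uniform_limit {0..1} (\<lambda>k. qv k v) Q sequentially \<and>
          (bdd_above (C_vals \<alpha> v) \<longrightarrow> holder_space (2 * \<alpha>) Q \<and>
             schauder_norm (2 * \<alpha>) Q \<le> (4 + 2 * (dyadic_const \<alpha>)\<^sup>2) * (Sup (C_vals \<alpha> v) + (schauder_norm \<alpha> v)\<^sup>2))"
  proof (intro exI[of _ "bracket v I"] conjI impI)
    show "uniform_limit {0..1} (\<lambda>k. qv k v) (bracket v I) sequentially" by (rule qv_uniform_limit[OF UI])
  qed (use bracket_holder[OF \<alpha> v UI] in simp_all)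
qed

end
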